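(* Let $A$ be a finite abelian group of order $n$ which is not a $2$-group, and let $S$ be a random inverse-closed subset of $A$ chosen as in the model below, with $\frac{25(\log n)^2}{n}\le p\le \frac12$. Then the probability that there exist subgroups $H,K$ of $A$ with $\{0\}\ne H\le K\lneq A$ such that $S\setminus K$ is a union of cosets of $H$ is $O(\exp(-(\log n)^2))$ as $n\to\infty$.
   Context: Random model: given a finite abelian group $A$ (written additively) and $0<p<1$, a random subset $S\subseteq A\setminus\{0\}$ is formed as follows: each element $g\in A$ of order exactly $2$ is put into $S$ independently with probability $p$, and for each pair $\{x,-x\}$ with $x\ne -x$, both $x$ and $-x$ are put into $S$ with probability $p$ (and neither otherwise), all these choices being independent. Thus $S=-S$ and $0\notin S$. $\log$ denotes $\log_2$. *)

theory Defs
  imports Complex_Main "HOL-Algebra.Multiplicative_Group"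
begin

text \<open>HOL-Algebra groups are written multiplicatively: the paper's 0 is the unit
 and -x is the inverse.\<close>

definition two_group :: "('a, 'b) monoid_scheme \<Rightarrow> bool" where
  "two_group G \<longleftrightarrow> (\<forall>x \<in> carrier G. \<exists>k::nat. group.ord G x = 2 ^ k)"

text \<open>The independent units of the random model: the sets {x, -x} for x nonzero
 (singletons for elements of order 2, pairs otherwise).\<close>
definition inv_orbits :: "('a, 'b) monoid_scheme \<Rightarrow> 'a set set" where
  "inv_orbits G = (\<lambda>x. {x, inv\<^bsub>G\<^esub> x}) ` (carrier G - {\<one>\<^bsub>G\<^esub>})"

definition rand_prob :: "('a, 'b) monoid_scheme \<Rightarrow> real \<Rightarrow> ('a set \<Rightarrow> bool) \<Rightarrow> real" where
  "rand_prob G p E =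
     (\<Sum>T \<in> {T. T \<subseteq> inv_orbits G \<and> E (\<Union>T)}.
        p ^ card T * (1 - p) ^ (card (inv_orbits G) - card T))"

definition bad_event :: "('a, 'b) monoid_scheme \<Rightarrow> 'a set \<Rightarrow> bool" where
  "bad_event G S \<longleftrightarrow>
     (\<exists>H K. subgroup H G \<and> subgroup K G \<and> H \<noteq> {\<one>\<^bsub>G\<^esub>} \<and> H \<subseteq> K \<and> K \<noteq> carrier G \<and>
        (\<exists>C \<subseteq> rcosets\<^bsub>G\<^esub> H. S - K = \<Union>C))"

end

theory Submission
  imports Defs
begin

text \<open>
  Let n be the order of A and L = log2 n.  If S is bad, witnessed by
  H \<le> K < A, pick h \<in> H - {1}; then S - K is a union of cosets of the cyclic group
  generated by h.  Every subgroup K is generated by at most L elements, so there are at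
  most n^L subgroups and the bad event is covered by at most n^(L+1) events E(h, K).

  For a fixed pair (h, K) the cosets of the group generated by h outside K, read as sets
  of inverse orbits {x, -x}, form disjoint blocks, and E(h, K) forces S to contain each
  block entirely or not at all.  Under the product measure such a constraint on a block
  of k \<ge> 2 orbits costs a factor p^k + (1-p)^k \<le> (1-p)^(k-1).  A coset meets a single
  orbit only if x^2 = h with h of order 2; in a non-2-group at most n/6 elements are
  such square roots, and |A - K| \<ge> n/2, so the blocks have total excess at least n/12
  and P(E(h, K)) \<le> exp(-pn/12).  Finally n^(L+1) exp(-pn/12) \<le> e^3 exp(-L^2) as soon
  as p \<ge> 25 L^2/n.
\<close>

section \<open>Product measure on the subsets of a finite set\<close>

definition subset_weight :: "'x set \<Rightarrow> real \<Rightarrow> 'x set \<Rightarrow> real" where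
  "subset_weight Om p T = p ^ card T * (1 - p) ^ (card Om - card T)"

lemma subset_weight_nonneg: "0 \<le> p \<Longrightarrow> p \<le> 1 \<Longrightarrow> 0 \<le> subset_weight Om p T"
  unfolding subset_weight_def by simp

lemma subset_weight_split:
  assumes fin: "finite Om" and BO: "B \<subseteq> Om"
  shows "(\<Sum>T\<in>{T. T \<subseteq> Om \<and> Q (T \<inter> B) \<and> R (T - B)}. subset_weight Om p T) =
     (\<Sum>U\<in>{U. U \<subseteq> B \<and> Q U}. subset_weight B p U) *
     (\<Sum>V\<in>{V. V \<subseteq> Om - B \<and> R V}. subset_weight (Om - B) p V)"
proof -
  let ?UU = "{U. U \<subseteq> B \<and> Q U}" and ?VV = "{V. V \<subseteq> Om - B \<and> R V}"
  have finB: "finite B" using finite_subset[OF BO fin] .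
  have weight_union: "subset_weight B p U * subset_weight (Om - B) p V = subset_weight Om p (U \<union> V)"
    if U: "U \<subseteq> B" and V: "V \<subseteq> Om - B" for U V
  proof -
    have cU: "card U \<le> card B" using card_mono[OF finB U] .
    have cV: "card V \<le> card (Om - B)" using card_mono[OF finite_Diff[OF fin] V] .
    have cOB: "card (Om - B) = card Om - card B" using card_Diff_subset[OF finB BO] .
    have "card B \<le> card Om" using card_mono[OF fin BO] .
    moreover have cUV: "card (U \<union> V) = card U + card V"
      using U V finite_subset[OF U finB] finite_subset[OF V finite_Diff[OF fin]]
      by (intro card_Un_disjoint) auto
    ultimately have "card Om - card (U \<union> V) = (card B - card U) + (card (Om - B) - card V)"
      using cU cV cOB by linarith
    then show ?thesis unfolding subset_weight_def cUV by (simp add: power_add algebra_simps)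
  qed
  have "(\<Sum>U\<in>?UU. subset_weight B p U) * (\<Sum>V\<in>?VV. subset_weight (Om - B) p V)
      = (\<Sum>(U,V)\<in>?UU \<times> ?VV. subset_weight B p U * subset_weight (Om - B) p V)"
    by (simp add: sum_product sum.cartesian_product)
  also have "\<dots> = (\<Sum>(U,V)\<in>?UU \<times> ?VV. subset_weight Om p (U \<union> V))"
    using weight_union by (intro sum.cong) auto
  also have "\<dots> = (\<Sum>T\<in>{T. T \<subseteq> Om \<and> Q (T \<inter> B) \<and> R (T - B)}. subset_weight Om p T)"
  proof (rule sum.reindex_bij_witness[where i="\<lambda>T. (T \<inter> B, T - B)" and j="\<lambda>(U,V). U \<union> V"])
    fix a assume "a \<in> ?UU \<times> ?VV"
    then show "(\<lambda>T. (T \<inter> B, T - B)) ((\<lambda>(U,V). U \<union> V) a) = a" by (cases a) auto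
  next
    fix a assume a: "a \<in> ?UU \<times> ?VV"
    then have "(fst a \<union> snd a) \<inter> B = fst a" "(fst a \<union> snd a) - B = snd a" by auto
    then show "(\<lambda>(U,V). U \<union> V) a \<in> {T. T \<subseteq> Om \<and> Q (T \<inter> B) \<and> R (T - B)}"
      using a BO by (cases a) auto
  qed (auto simp: BO)
  finally show ?thesis by simp
qed

lemma subset_weight_total:
  assumes "finite Om"
  shows "(\<Sum>T\<in>{T. T \<subseteq> Om}. subset_weight Om p T) = 1"
  using assms
proof (induction Om rule: finite_induct)
  case empty
  then show ?case by (simp add: subset_weight_def)
next
  case (insert x F)
  have "{U. U \<subseteq> {x} \<and> True} = {{}, {x}}" by auto
  moreover have "insert x F - {x} = F" using insert by auto
  moreover have "(\<Sum>T\<in>{T. T \<subseteq> insert x F \<and> True \<and> True}. subset_weight (insert x F) p T) =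
      (\<Sum>U\<in>{U. U \<subseteq> {x} \<and> True}. subset_weight {x} p U) *
      (\<Sum>V\<in>{V. V \<subseteq> insert x F - {x} \<and> True}. subset_weight (insert x F - {x}) p V)"
    by (rule subset_weight_split) (use insert in auto)
  ultimately show ?case using insert by (simp add: subset_weight_def)
qed

lemma all_or_nothing_block:
  fixes p :: real
  assumes "0 \<le> p" "p \<le> 1/2" "1 \<le> k"
  shows "p ^ k + (1 - p) ^ k \<le> (1 - p) ^ (k - 1)"
proof -
  obtain j where k: "k = Suc j" using assms(3) by (cases k) auto
  have "p ^ j \<le> (1 - p) ^ j" using assms by (intro power_mono) auto
  then have "p * p ^ j \<le> p * (1 - p) ^ j" using assms by (intro mult_left_mono) auto
  then show ?thesis using k by (simp add: algebra_simps)
qed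

lemma all_or_nothing_bound:
  assumes "finite BB" "finite Om" "\<forall>B\<in>BB. B \<subseteq> Om \<and> 2 \<le> card B" "pairwise disjnt BB"
    "0 \<le> p" "p \<le> 1/2"
  shows "(\<Sum>T\<in>{T. T \<subseteq> Om \<and> (\<forall>B\<in>BB. B \<subseteq> T \<or> B \<inter> T = {})}. subset_weight Om p T)
           \<le> (1 - p) ^ (\<Sum>B\<in>BB. card B - 1)"
  using assms
proof (induction BB arbitrary: Om rule: finite_induct)
  case empty
  then show ?case using subset_weight_total[of Om p] by simp
next
  case (insert B F)
  have BOm: "B \<subseteq> Om" and cB: "2 \<le> card B" using insert by auto
  then have finB: "finite B" and Bne: "B \<noteq> {}" by (auto intro: card_ge_0_finite)
  have disj: "\<forall>B'\<in>F. B' \<inter> B = {}" using insert(2,6) by (auto simp: pairwise_def disjnt_def)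
  have events: "{T. T \<subseteq> Om \<and> (\<forall>B\<in>insert B F. B \<subseteq> T \<or> B \<inter> T = {})} =
     {T. T \<subseteq> Om \<and> (T \<inter> B = B \<or> T \<inter> B = {}) \<and> (\<forall>B'\<in>F. B' \<subseteq> T - B \<or> B' \<inter> (T - B) = {})}"
    using disj by blast
  have IH: "(\<Sum>T\<in>{T. T \<subseteq> Om - B \<and> (\<forall>B'\<in>F. B' \<subseteq> T \<or> B' \<inter> T = {})}. subset_weight (Om - B) p T)
           \<le> (1 - p) ^ (\<Sum>B\<in>F. card B - 1)"
    using insert disj by (intro insert.IH) (auto simp: pairwise_insert)
  have "{U. U \<subseteq> B \<and> (U = B \<or> U = {})} = {B, {}}" by auto
  then have block: "(\<Sum>U\<in>{U. U \<subseteq> B \<and> (U = B \<or> U = {})}. subset_weight B p U) = p ^ card B + (1-p) ^ card B"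
    using Bne by (simp add: subset_weight_def)
  have "(\<Sum>T\<in>{T. T \<subseteq> Om \<and> (\<forall>B\<in>insert B F. B \<subseteq> T \<or> B \<inter> T = {})}. subset_weight Om p T)
     = (p ^ card B + (1-p) ^ card B) *
       (\<Sum>T\<in>{T. T \<subseteq> Om - B \<and> (\<forall>B'\<in>F. B' \<subseteq> T \<or> B' \<inter> T = {})}. subset_weight (Om - B) p T)"
    unfolding events block[symmetric]
    by (rule subset_weight_split) (use insert BOm in auto)
  also have "\<dots> \<le> (1 - p) ^ (card B - 1) * (1 - p) ^ (\<Sum>B\<in>F. card B - 1)"
    using IH all_or_nothing_block[of p "card B"] insert cB
    by (intro mult_mono) (auto intro!: sum_nonneg subset_weight_nonneg)
  also have "\<dots> = (1 - p) ^ (\<Sum>B\<in>insert B F. card B - 1)"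
    by (simp only: sum.insert[OF insert(1,2)] power_add)
  finally show ?case .
qed

lemma rand_prob_as_weight:
  "rand_prob G p E = (\<Sum>T\<in>{T. T \<subseteq> inv_orbits G \<and> E (\<Union>T)}. subset_weight (inv_orbits G) p T)"
  unfolding rand_prob_def subset_weight_def by simp

lemma sum_UN_le:
  fixes f :: "'x \<Rightarrow> real"
  assumes "finite I" "\<And>i. i \<in> I \<Longrightarrow> finite (A i)" "\<And>x. 0 \<le> f x"
  shows "sum f (\<Union>i\<in>I. A i) \<le> (\<Sum>i\<in>I. sum f (A i))"
  using assms
proof (induction I rule: finite_induct)
  case empty
  then show ?case by simp
next
  case (insert j I)
  have "sum f (\<Union>i\<in>insert j I. A i) \<le> sum f (A j) + sum f (\<Union>i\<in>I. A i)"
    using insert by (simp add: sum_Un sum_nonneg)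
  also have "\<dots> \<le> (\<Sum>i\<in>insert j I. sum f (A i))" using insert by simp
  finally show ?case .
qed

lemma rand_prob_union_bound:
  assumes fin: "finite (inv_orbits G)" and I: "finite I" and p: "0 \<le> p" "p \<le> 1"
    and cover: "\<And>S. E S \<Longrightarrow> \<exists>i\<in>I. F i S"
  shows "rand_prob G p E \<le> (\<Sum>i\<in>I. rand_prob G p (F i))"
proof -
  let ?w = "subset_weight (inv_orbits G) p"
  let ?A = "\<lambda>i. {T. T \<subseteq> inv_orbits G \<and> F i (\<Union>T)}"
  have "rand_prob G p E \<le> sum ?w (\<Union>i\<in>I. ?A i)"
    unfolding rand_prob_as_weight
    using fin I p cover subset_weight_nonneg by (intro sum_mono2) auto
  also have "\<dots> \<le> (\<Sum>i\<in>I. sum ?w (?A i))"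
    using fin I p subset_weight_nonneg by (intro sum_UN_le) auto
  finally show ?thesis by (simp add: rand_prob_as_weight)
qed

section \<open>Counting subgroups\<close>

context group
begin

text \<open>By Lagrange, a proper inclusion of finite subgroups at least doubles the order.\<close>
lemma subgroup_card_double:
  assumes J: "subgroup J G" and J': "subgroup J' G" and fin: "finite J'" and psub: "J \<subset> J'"
  shows "2 * card J \<le> card J'"
proof -
  interpret J': group "G\<lparr>carrier := J'\<rparr>"
    using subgroup.subgroup_is_group[OF J' group_axioms] .
  have "subgroup J (G\<lparr>carrier := J'\<rparr>)" using subgroup_incl[OF J J'] psub by blast
  then have "card J dvd card J'"
    using J'.lagrange by (simp add: order_def) (metis dvd_triv_right)
  then obtain c where c: "card J' = card J * c" by blast
  have "card J < card J'" using psubset_card_mono[OF fin psub] .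
  then have "c \<noteq> 0" "c \<noteq> 1" using c by auto
  then have "card J * 2 \<le> card J * c" by (intro mult_le_mono2) linarith
  then show ?thesis using c by (simp add: mult.commute)
qed

lemma card_proper_subgroup:
  assumes "finite (carrier G)" "subgroup K G" "K \<noteq> carrier G"
  shows "2 * card K \<le> order G"
  unfolding order_def using assms subgroup.subset[OF assms(2)]
  by (intro subgroup_card_double subgroup_self) auto

text \<open>Adjoining generators one at a time: each new generator outside the current
  subgroup doubles it, so a finite subgroup K has a generating list of length at most
  log2 |K|.\<close>
lemma subgroup_short_generators:
  assumes fin: "finite (carrier G)" and K: "subgroup K G"
  shows "\<exists>xs. set xs \<subseteq> K \<and> 2 ^ length xs \<le> card K \<and> generate G (set xs) = K"
proof -
  have finK: "finite K" using fin subgroup.subset[OF K] finite_subset by blast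
  have KG: "K \<subseteq> carrier G" using subgroup.subset[OF K] .
  have extend: "\<exists>xs. set xs \<subseteq> K \<and> 2 ^ length xs \<le> card K \<and> generate G (set xs) = K"
    if "set ys \<subseteq> K" "2 ^ length ys \<le> card (generate G (set ys))" for ys
    using that
  proof (induction "card K - card (generate G (set ys))" arbitrary: ys rule: less_induct)
    case less
    let ?J = "generate G (set ys)"
    have JK: "?J \<subseteq> K" using generate_subgroup_incl[OF less.prems(1) K] .
    show ?case
    proof (cases "?J = K")
      case True
      then show ?thesis using less.prems by auto
    next
      case False
      then obtain y where y: "y \<in> K" "y \<notin> ?J" using JK by blast
      let ?J' = "generate G (set (y # ys))"
      have sub: "set (y # ys) \<subseteq> K" using less.prems(1) y(1) by simp
      have J'K: "?J' \<subseteq> K" using generate_subgroup_incl[OF sub K] .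
      have "?J \<subset> ?J'"
        using mono_generate[of "set ys" "set (y # ys)"] generate.incl[of y "set (y # ys)" G] y(2)
        by auto
      then have "2 * card ?J \<le> card ?J'" "card ?J < card ?J'"
        using subgroup_card_double generate_is_subgroup less.prems(1) sub KG
          finite_subset[OF J'K finK] psubset_card_mono[OF finite_subset[OF J'K finK]]
        by (metis dual_order.trans set_subset_Cons)+
      moreover have "card ?J' \<le> card K" using card_mono[OF finK J'K] .
      ultimately show ?thesis
        using less.hyps[of "y # ys"] less.prems sub by simp
    qed
  qed
  have "card K \<ge> 1" using subgroup.one_closed[OF K] finK by (metis card_0_eq empty_iff less_one not_le)
  then show ?thesis using extend[of "[]"] by (simp add: generate_empty)
qed

lemma generate_insert_one:
  assumes "A \<subseteq> carrier G"
  shows "generate G (insert \<one> A) = generate G A"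
  using assms generate.one generate.incl
  by (intro equalityI mono_generate generate_subgroup_incl generate_is_subgroup) auto

text \<open>A group of order n < 2^(m+1) has at most n^m subgroups: each is generated by a
  list of exactly m elements (pad with the unit).\<close>
lemma card_subgroups_le:
  assumes fin: "finite (carrier G)" and m: "order G < 2 ^ Suc m"
  shows "card {K. subgroup K G} \<le> order G ^ m"
proof -
  let ?Lists = "{xs. set xs \<subseteq> carrier G \<and> length xs = m}"
  have "{K. subgroup K G} \<subseteq> (\<lambda>xs. generate G (set xs)) ` ?Lists"
  proof
    fix K assume "K \<in> {K. subgroup K G}"
    then have K: "subgroup K G" by simp
    then obtain xs where xs: "set xs \<subseteq> K" "2 ^ length xs \<le> card K" "generate G (set xs) = K"
      using subgroup_short_generators[OF fin] by blast
    have KG: "K \<subseteq> carrier G" using subgroup.subset[OF K] .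
    have "card K \<le> order G" unfolding order_def using card_mono[OF fin KG] .
    then have "2 ^ length xs < (2::nat) ^ Suc m" using xs(2) m by linarith
    then have "length xs < Suc m" by (rule power_less_imp_less_exp[rotated]) simp
    then have len: "length xs \<le> m" by simp
    define ys where "ys = xs @ replicate (m - length xs) \<one>"
    have "set ys = set xs \<or> set ys = insert \<one> (set xs)" unfolding ys_def by auto
    then have "generate G (set ys) = K"
      using generate_insert_one[of "set xs"] xs KG by auto
    moreover have "ys \<in> ?Lists" unfolding ys_def using xs(1) KG len by auto
    ultimately show "K \<in> (\<lambda>xs. generate G (set xs)) ` ?Lists" by blast
  qed
  then have "card {K. subgroup K G} \<le> card ?Lists"
    using fin by (intro surj_card_le) (simp_all add: finite_lists_length_eq)
  also have "\<dots> = order G ^ m" unfolding order_def using fin by (simp add: card_lists_length_eq)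
  finally show ?thesis .
qed

end

section \<open>Square roots in groups that are not 2-groups\<close>

lemma card_fibres_lower_bound:
  assumes X: "finite X" and Q: "finite Q" and v: "inj_on v Q"
    and large: "\<And>q. q \<in> Q \<Longrightarrow> c \<le> card {x \<in> X. f x = v q}"
  shows "card Q * c \<le> card X"
proof -
  have disj: "{x \<in> X. f x = v q} \<inter> {x \<in> X. f x = v q'} = {}"
    if "q \<in> Q" "q' \<in> Q" "q \<noteq> q'" for q q'
    using inj_onD[OF v _ that(1,2)] that(3) by auto
  have "card Q * c = (\<Sum>q\<in>Q. c)" by simp
  also have "\<dots> \<le> (\<Sum>q\<in>Q. card {x \<in> X. f x = v q})" using large by (rule sum_mono)
  also have "\<dots> = card (\<Union>q\<in>Q. {x \<in> X. f x = v q})"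
    using disj X Q by (intro card_UN_disjoint[symmetric]) auto
  also have "\<dots> \<le> card X" using X by (intro card_mono) auto
  finally show ?thesis .
qed

lemma two_power_times_odd: "0 < (n::nat) \<Longrightarrow> \<exists>k q. n = 2 ^ k * q \<and> odd q"
proof (induction n rule: less_induct)
  case (less n)
  show ?case
  proof (cases "even n")
    case True
    then obtain m where m: "n = 2 * m" by blast
    then have "m < n" "0 < m" using less.prems by auto
    then obtain k q where "m = 2 ^ k * q" "odd q" using less.IH by blast
    then show ?thesis using m by (intro exI[of _ "Suc k"] exI[of _ q]) auto
  next
    case False
    then show ?thesis by (intro exI[of _ 0] exI[of _ n]) auto
  qed
qed

context group
begin

lemma two_power_odd_trivial:
  assumes c: "c \<in> carrier G" and "c [^] ((2::nat) ^ k) = \<one>" "c [^] (b::nat) = \<one>" "odd b"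
  shows "c = \<one>"
proof -
  have "ord c dvd 2 ^ k" "ord c dvd b" using assms(2,3) pow_eq_id[OF c] by simp_all
  moreover have "coprime ((2::nat) ^ k) b" using \<open>odd b\<close> by simp
  ultimately have "ord c = 1" by (intro coprime_common_divisor_nat)
  then show ?thesis using ord_eq_1[OF c] by simp
qed

text \<open>A finite group that is not a 2-group has a nontrivial element of odd order: if
  ord x = 2^k q with q odd and q \<noteq> 1, take x^(2^k).\<close>
lemma exists_odd_order_element:
  assumes fin: "finite (carrier G)" and nt: "\<not> two_group G"
  shows "\<exists>g\<in>carrier G. g \<noteq> \<one> \<and> odd (ord g)"
proof -
  obtain x where x: "x \<in> carrier G" "\<forall>k::nat. ord x \<noteq> 2 ^ k"
    using nt unfolding two_group_def by blast
  obtain k q where kq: "ord x = 2 ^ k * q" "odd q"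
    using two_power_times_odd[of "ord x"] ord_ge_1[OF fin x(1)] by auto
  define g where "g = x [^] ((2::nat) ^ k)"
  have g: "g \<in> carrier G" unfolding g_def using x(1) by simp
  have "g [^] q = \<one>" unfolding g_def using x(1) by (simp add: nat_pow_pow kq(1)[symmetric])
  then have "ord g dvd q" using pow_eq_id[OF g] by simp
  then have "odd (ord g)" using kq(2) by (meson dvd_trans)
  have "g \<noteq> \<one>"
  proof
    assume "g = \<one>"
    then have "2 ^ k * q dvd 2 ^ k * 1" using pow_eq_id[OF x(1)] kq(1) unfolding g_def by simp
    then have "q = 1" by simp
    then show False using x(2) kq(1) by simp
  qed
  then show ?thesis using g \<open>odd (ord g)\<close> by blast
qed

end

context comm_group
begin

lemma two_odd_torsion_unique:
  assumes carr: "a \<in> carrier G" "a' \<in> carrier G" "b \<in> carrier G" "b' \<in> carrier G"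
    and two: "a \<otimes> a = \<one>" "a' \<otimes> a' = \<one>" and odd: "b [^] N = \<one>" "b' [^] (N::nat) = \<one>" "odd N"
    and eq: "a \<otimes> b = a' \<otimes> b'"
  shows "a = a' \<and> b = b'"
proof -
  define c where "c = a \<otimes> inv a'"
  have cc: "c \<in> carrier G" unfolding c_def using carr by simp
  have c_alt: "c = b' \<otimes> inv b"
    unfolding c_def using carr eq by (smt (verit, ccfv_threshold) inv_closed inv_solve_left m_assoc m_closed m_comm)
  have "c [^] ((2::nat) ^ 1) = (a \<otimes> a) \<otimes> inv (a' \<otimes> a')"
    unfolding c_def using carr by (simp add: numeral_2_eq_2 m_ac inv_mult)
  then have "c [^] ((2::nat) ^ 1) = \<one>" using two by simp
  moreover have "c [^] N = \<one>"
    unfolding c_alt using carr odd by (simp add: pow_mult_distrib[OF m_comm] nat_pow_inv)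
  ultimately have "c = \<one>" using two_power_odd_trivial[OF cc] odd(3) by blast
  then have "a = a'" unfolding c_def using carr by (metis inv_closed inv_equality inv_inv)
  moreover have "b = b'" using eq \<open>a = a'\<close> carr by (metis Units_eq Units_l_cancel)
  ultimately show ?thesis by simp
qed

text \<open>All nonempty fibres of the squaring map have the same size; we need the
  inequality: z \<mapsto> z x0^-1 w maps square roots of x0^2 to square roots of w^2.\<close>
lemma card_square_roots_translate:
  assumes fin: "finite (carrier G)" and x0: "x0 \<in> carrier G" and w: "w \<in> carrier G"
  shows "card {z \<in> carrier G. z \<otimes> z = x0 \<otimes> x0} \<le> card {z \<in> carrier G. z \<otimes> z = w \<otimes> w}"
proof (rule card_inj_on_le)
  let ?f = "\<lambda>z. z \<otimes> inv x0 \<otimes> w"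
  show "inj_on ?f {z \<in> carrier G. z \<otimes> z = x0 \<otimes> x0}"
    using x0 w by (intro inj_onI) simp
  show "?f ` {z \<in> carrier G. z \<otimes> z = x0 \<otimes> x0} \<subseteq> {z \<in> carrier G. z \<otimes> z = w \<otimes> w}"
  proof
    fix y assume "y \<in> ?f ` {z \<in> carrier G. z \<otimes> z = x0 \<otimes> x0}"
    then obtain z where z: "z \<in> carrier G" "z \<otimes> z = x0 \<otimes> x0" and y: "y = ?f z" by blast
    have "y \<otimes> y = (z \<otimes> z) \<otimes> inv (x0 \<otimes> x0) \<otimes> (w \<otimes> w)"
      unfolding y using z(1) x0 w by (simp add: m_ac inv_mult)
    also have "\<dots> = w \<otimes> w" using z(2) x0 w by (metis r_inv l_one m_closed)
    finally show "y \<in> {z \<in> carrier G. z \<otimes> z = w \<otimes> w}" using y z(1) x0 w by simp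
  qed
  show "finite {z \<in> carrier G. z \<otimes> z = w \<otimes> w}" using fin by simp
qed

text \<open>An element of odd order is a square: g = (g^((ord g + 1)/2))^2.\<close>
lemma odd_order_square:
  assumes g: "g \<in> carrier G" "odd (ord g)"
  shows "\<exists>r\<in>carrier G. r \<otimes> r = g"
proof
  let ?r = "g [^] ((ord g + 1) div 2)"
  have "?r \<otimes> ?r = g [^] (ord g + 1)"
    using g by (metis even_plus_one_iff even_two_times_div_two mult.commute mult_2_right nat_pow_mult)
  then show "?r \<otimes> ?r = g" using g by simp
qed (use g in simp)

lemma two_odd_products_inj:
  assumes h: "h \<in> carrier G" "h \<noteq> \<one>" "h \<otimes> h = \<one>"
    and g: "g \<in> carrier G" "odd (ord g)" "3 \<le> ord g"
  shows "inj_on (\<lambda>(e, i). h [^] e \<otimes> g [^] i) ({0..<2::nat} \<times> {0..<3::nat})"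
proof (rule inj_onI)
  fix q q' assume q: "q \<in> {0..<2::nat} \<times> {0..<3::nat}" "q' \<in> {0..<2::nat} \<times> {0..<3::nat}"
    and "(\<lambda>(e, i). h [^] e \<otimes> g [^] i) q = (\<lambda>(e, i). h [^] e \<otimes> g [^] i) q'"
  moreover obtain e i e' j where qs: "q = (e, i)" "q' = (e', j)" by force
  ultimately have prod: "h [^] e \<otimes> g [^] i = h [^] e' \<otimes> g [^] j" by simp
  have h_pow: "h [^] k \<otimes> h [^] k = \<one>" for k :: nat
    using h by (metis pow_mult_distrib nat_pow_one)
  have g_pow: "(g [^] k) [^] ord g = \<one>" for k :: nat
    using g pow_eq_id by (simp add: nat_pow_pow)
  have "h [^] e = h [^] e' \<and> g [^] i = g [^] j"
    using prod h g by (intro two_odd_torsion_unique h_pow) (simp_all add: g_pow)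
  then have eq: "h [^] e = h [^] e'" "g [^] i = g [^] j" by simp_all
  have "e = e'" using eq(1) q qs h(1,2) by (auto simp: less_2_cases_iff)
  moreover have "i = j" using inj_onD[OF ord_inj[OF g(1)] eq(2)] q qs g(3) by auto
  ultimately show "q = q'" using qs by simp
qed

text \<open>If h has order 2 and G is not a 2-group, pick a square root x0 of h and an element
  g \<noteq> 1 of odd order with square root r.  The squares of x0^e r^i are the six distinct
  elements h^e g^i, and each fibre of squaring above them is at least as large as the
  set of square roots of h.  Hence these roots make up at most a sixth of the group.\<close>
lemma card_square_roots:
  assumes fin: "finite (carrier G)" and nt: "\<not> two_group G"
    and h: "h \<in> carrier G" "h \<noteq> \<one>" "h \<otimes> h = \<one>"
  shows "6 * card {x \<in> carrier G. x \<otimes> x = h} \<le> order G"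
proof (cases "\<exists>x0\<in>carrier G. x0 \<otimes> x0 = h")
  case False
  then have "{x \<in> carrier G. x \<otimes> x = h} = {}" by blast
  then show ?thesis by (metis card.empty mult_0_right zero_le)
next
  case True
  then obtain x0 where x0: "x0 \<in> carrier G" "x0 \<otimes> x0 = h" by blast
  obtain g where g: "g \<in> carrier G" "g \<noteq> \<one>" "odd (ord g)"
    using exists_odd_order_element[OF fin nt] by blast
  have ord_g: "3 \<le> ord g"
    using ord_ge_1[OF fin g(1)] ord_eq_1[OF g(1)] g(2,3) by (cases "ord g = 2") auto
  obtain r where r: "r \<in> carrier G" "r \<otimes> r = g" using odd_order_square[OF g(1,3)] by blast
  define root where "root = (\<lambda>(e, i). x0 [^] (e::nat) \<otimes> r [^] (i::nat))"
  have root_carrier: "root q \<in> carrier G" for q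
    unfolding root_def using x0(1) r(1) by (cases q) simp
  have root_square: "(\<lambda>q. root q \<otimes> root q) = (\<lambda>(e, i). h [^] e \<otimes> g [^] i)"
  proof
    fix q :: "nat \<times> nat"
    obtain e i where q: "q = (e, i)" by force
    have "root q \<otimes> root q = (x0 \<otimes> x0) [^] e \<otimes> (r \<otimes> r) [^] i"
      unfolding root_def q using x0(1) r(1) by (simp add: pow_mult_distrib m_ac)
    then show "root q \<otimes> root q = (\<lambda>(e, i). h [^] e \<otimes> g [^] i) q" using q x0 r by simp
  qed
  have "card ({0..<2::nat} \<times> {0..<3::nat}) * card {x \<in> carrier G. x \<otimes> x = h} \<le> order G"
    unfolding order_def
  proof (rule card_fibres_lower_bound[where f = "\<lambda>z. z \<otimes> z"])
    show "inj_on (\<lambda>q. root q \<otimes> root q) ({0..<2::nat} \<times> {0..<3::nat})"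
      unfolding root_square using two_odd_products_inj[OF h g(1,3) ord_g] .
    show "card {x \<in> carrier G. x \<otimes> x = h} \<le> card {z \<in> carrier G. z \<otimes> z = root q \<otimes> root q}" for q
      unfolding x0(2)[symmetric] using card_square_roots_translate[OF fin x0(1) root_carrier] .
  qed (use fin in simp_all)
  then show ?thesis by simp
qed

end

section \<open>Inverse orbits and coset blocks\<close>

context comm_group
begin

definition inv_orbit :: "'a \<Rightarrow> 'a set" where
  "inv_orbit x = {x, inv x}"

lemma inv_orbit_in_inv_orbits: "x \<in> carrier G \<Longrightarrow> x \<noteq> \<one> \<Longrightarrow> inv_orbit x \<in> inv_orbits G"
  unfolding inv_orbit_def inv_orbits_def by blast

lemma inv_orbit_inv: "x \<in> carrier G \<Longrightarrow> inv_orbit (inv x) = inv_orbit x"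
  unfolding inv_orbit_def by auto

lemma inv_orbit_eqD: "inv_orbit a = inv_orbit b \<Longrightarrow> b = a \<or> b = inv a"
  unfolding inv_orbit_def by (metis doubleton_eq_iff)

lemma finite_inv_orbits: "finite (carrier G) \<Longrightarrow> finite (inv_orbits G)"
  unfolding inv_orbits_def by simp

lemma mem_Union_inv_orbits:
  assumes T: "T \<subseteq> inv_orbits G" and x: "x \<in> carrier G" "x \<noteq> \<one>"
  shows "x \<in> \<Union>T \<longleftrightarrow> inv_orbit x \<in> T"
proof
  assume "x \<in> \<Union>T"
  then obtain y where y: "y \<in> carrier G" "inv_orbit y \<in> T" "x \<in> inv_orbit y"
    using T unfolding inv_orbits_def inv_orbit_def by blast
  then have "inv_orbit x = inv_orbit y" using inv_orbit_inv unfolding inv_orbit_def by auto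
  then show "inv_orbit x \<in> T" using y(2) by simp
next
  assume "inv_orbit x \<in> T"
  then show "x \<in> \<Union>T" unfolding inv_orbit_def by blast
qed

lemma card_le_twice_inv_orbits:
  assumes "finite A"
  shows "card A \<le> 2 * card (inv_orbit ` A)"
proof -
  have "card A \<le> card (\<Union>(inv_orbit ` A))"
    using assms by (intro card_mono) (auto simp: inv_orbit_def)
  also have "\<dots> \<le> (\<Sum>Orb\<in>inv_orbit ` A. card Orb)" by (rule card_Union_le_sum_card)
  also have "\<dots> \<le> (\<Sum>Orb\<in>inv_orbit ` A. 2)"
    by (intro sum_mono) (auto simp: inv_orbit_def card_insert_le_m1)
  finally show ?thesis by simp
qed

lemma inv_orbits_inverse_coset:
  assumes H: "subgroup H G" and a: "a \<in> carrier G"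
  shows "inv_orbit ` (H #> inv a) = inv_orbit ` (H #> a)"
proof -
  have "H #> inv a = set_inv (H #> a)"
    using normal.rcos_inv[OF subgroup_imp_normal[OF H] a] by simp
  moreover have "H #> a \<subseteq> carrier G" using r_coset_subset_G[OF subgroup.subset[OF H] a] .
  ultimately show ?thesis
    unfolding SET_INV_def using inv_orbit_inv by (auto simp: image_iff) (metis subsetD)+
qed

context
  fixes H K :: "'a set"
  assumes H: "subgroup H G" and K: "subgroup K G" and HK: "H \<subseteq> K"
begin

lemma coset_outside:
  assumes x: "x \<in> carrier G" "x \<notin> K"
  shows "H #> x \<subseteq> carrier G - K"
proof
  fix z assume "z \<in> H #> x"
  then obtain k where k: "k \<in> K" "z = k \<otimes> x" using HK unfolding r_coset_def by blast
  have kc: "k \<in> carrier G" using subgroup.mem_carrier[OF K k(1)] .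
  have "z \<notin> K"
  proof
    assume "z \<in> K"
    then have "inv k \<otimes> z \<in> K" using subgroup.m_closed[OF K subgroup.m_inv_closed[OF K k(1)]] by blast
    moreover have "inv k \<otimes> z = x" using k(2) kc x(1) by (simp add: m_assoc[symmetric])
    ultimately show False using x(2) by simp
  qed
  then show "z \<in> carrier G - K" using k(2) kc x(1) by simp
qed

definition coset_blocks :: "'a set set set" where
  "coset_blocks = {inv_orbit ` (H #> x) | x. x \<in> carrier G - K \<and> 2 \<le> card (inv_orbit ` (H #> x))}"

lemma coset_blocks_orbits:
  assumes "B \<in> coset_blocks"
  shows "B \<subseteq> inv_orbits G \<and> 2 \<le> card B"
proof -
  obtain x where x: "x \<in> carrier G" "x \<notin> K" "B = inv_orbit ` (H #> x)" "2 \<le> card B"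
    using assms unfolding coset_blocks_def by blast
  have "H #> x \<subseteq> carrier G - {\<one>}" using coset_outside[OF x(1,2)] subgroup.one_closed[OF K] by blast
  then show ?thesis using x(3,4) inv_orbit_in_inv_orbits by blast
qed

lemma finite_coset_blocks: "finite (carrier G) \<Longrightarrow> finite coset_blocks"
  unfolding coset_blocks_def by simp

text \<open>Two cosets sharing an orbit are equal or inverse to each other, so distinct blocks
  are disjoint.\<close>
lemma coset_blocks_disjoint: "pairwise disjnt coset_blocks"
proof (rule pairwiseI, rule ccontr)
  fix B1 B2 assume B: "B1 \<in> coset_blocks" "B2 \<in> coset_blocks" "B1 \<noteq> B2" "\<not> disjnt B1 B2"
  obtain x y where xy: "x \<in> carrier G" "y \<in> carrier G"
    "B1 = inv_orbit ` (H #> x)" "B2 = inv_orbit ` (H #> y)"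
    using B(1,2) unfolding coset_blocks_def by blast
  obtain a b where a: "a \<in> H #> x" and b: "b \<in> H #> y" and ab: "inv_orbit a = inv_orbit b"
    using B(4) xy(3,4) unfolding disjnt_def by blast
  have ac: "a \<in> carrier G" using a r_coset_subset_G[OF subgroup.subset[OF H] xy(1)] by blast
  have cosets: "H #> x = H #> a" "H #> y = H #> b"
    using repr_independence[OF a xy(1) H] repr_independence[OF b xy(2) H] by simp_all
  have "B2 = B1"
  proof (cases "b = a")
    case True
    then show ?thesis using xy(3,4) cosets by simp
  next
    case False
    then have "b = inv a" using inv_orbit_eqD[OF ab] by simp
    then show ?thesis using xy(3,4) cosets inv_orbits_inverse_coset[OF H ac] by simp
  qed
  then show False using B(3) by simp
qed

lemma coset_closed_all_or_nothing:
  assumes T: "T \<subseteq> inv_orbits G" and closed: "\<forall>y\<in>\<Union>T - K. H #> y \<subseteq> \<Union>T"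
    and B: "B \<in> coset_blocks"
  shows "B \<subseteq> T \<or> B \<inter> T = {}"
proof -
  obtain x where x: "x \<in> carrier G" "x \<notin> K" and Bx: "B = inv_orbit ` (H #> x)"
    using B unfolding coset_blocks_def by blast
  have mem: "z \<in> \<Union>T \<longleftrightarrow> inv_orbit z \<in> T" if "z \<in> H #> x" for z
    using mem_Union_inv_orbits[OF T] coset_outside[OF x] subgroup.one_closed[OF K] that by blast
  show ?thesis
  proof (cases "\<exists>y\<in>H #> x. y \<in> \<Union>T")
    case True
    then obtain y where y: "y \<in> H #> x" "y \<in> \<Union>T" by blast
    have "y \<notin> K" using coset_outside[OF x] y(1) by blast
    then have "H #> y \<subseteq> \<Union>T" using closed y(2) by blast
    then have "H #> x \<subseteq> \<Union>T" using repr_independence[OF y(1) x(1) H] by simp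
    then show ?thesis using mem Bx by blast
  next
    case False
    then show ?thesis using mem Bx by blast
  qed
qed

text \<open>A coset H x meets a single orbit only in a degenerate situation: then h x = x^-1
  and h^2 x \<in> {x, x^-1} for any h \<in> H - {1}, forcing h^2 = 1 and x^2 = h.\<close>
lemma coset_single_orbit:
  assumes fin: "finite (carrier G)" and h: "h \<in> H" "h \<noteq> \<one>" and x: "x \<in> carrier G"
    and single: "card (inv_orbit ` (H #> x)) < 2"
  shows "h \<otimes> h = \<one> \<and> x \<otimes> x = h"
proof -
  have hc: "h \<in> carrier G" using subgroup.mem_carrier[OF H h(1)] .
  have "H #> x \<subseteq> carrier G" using r_coset_subset_G[OF subgroup.subset[OF H] x] .
  then have "finite (inv_orbit ` (H #> x))" using fin finite_subset by blast
  moreover have "card (inv_orbit ` (H #> x)) \<le> Suc 0" using single by simp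
  ultimately have "\<forall>O1\<in>inv_orbit ` (H #> x). \<forall>O2\<in>inv_orbit ` (H #> x). O1 = O2"
    using card_le_Suc0_iff_eq by blast
  then have same: "inv_orbit y = inv_orbit x" if "y \<in> H #> x" for y
    using that rcos_self[OF x H] by blast
  have "h \<otimes> x \<in> H #> x" using rcosI[OF h(1) subgroup.subset[OF H] x] .
  then have "h \<otimes> x = x \<or> h \<otimes> x = inv x" using inv_orbit_eqD same by metis
  moreover have "h \<otimes> x \<noteq> x" using hc x h(2) by simp
  ultimately have hx: "h \<otimes> x = inv x" by blast
  have "(h \<otimes> h) \<otimes> x \<in> H #> x"
    using rcosI[OF subgroup.m_closed[OF H h(1) h(1)] subgroup.subset[OF H] x] .
  then have "(h \<otimes> h) \<otimes> x = x \<or> (h \<otimes> h) \<otimes> x = h \<otimes> x"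
    using inv_orbit_eqD same hx by metis
  moreover have "(h \<otimes> h) \<otimes> x \<noteq> h \<otimes> x" using hc x h(2) by simp
  ultimately have hh: "h \<otimes> h = \<one>" using hc x by simp
  then have "inv h = h" using hc inv_equality by blast
  then have "x \<otimes> x = h" using hx hc x by (metis m_assoc m_closed m_comm r_inv right_cancel)
  then show ?thesis using hh by simp
qed

text \<open>The points outside K whose coset meets at least two orbits lie in the blocks; each
  orbit has at most two points and a block B has |B| \<le> 2 (|B| - 1) orbits.\<close>
lemma card_block_points:
  assumes fin: "finite (carrier G)"
  shows "card {x \<in> carrier G - K. 2 \<le> card (inv_orbit ` (H #> x))}
    \<le> 4 * (\<Sum>B\<in>coset_blocks. card B - 1)"
proof -
  define Good where "Good = {x \<in> carrier G - K. 2 \<le> card (inv_orbit ` (H #> x))}"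
  have finGood: "finite Good" unfolding Good_def using fin by simp
  have blocks_fin: "\<And>B. B \<in> coset_blocks \<Longrightarrow> finite B"
    using coset_blocks_orbits finite_inv_orbits[OF fin] finite_subset by blast
  have "inv_orbit ` Good \<subseteq> \<Union>coset_blocks"
    unfolding Good_def coset_blocks_def using rcos_self[OF _ H] by blast
  then have "card (inv_orbit ` Good) \<le> card (\<Union>coset_blocks)"
    using blocks_fin finite_coset_blocks[OF fin] by (intro card_mono) auto
  also have "\<dots> = (\<Sum>B\<in>coset_blocks. card B)"
    using card_Union_disjoint[OF coset_blocks_disjoint] blocks_fin by blast
  also have "\<dots> \<le> (\<Sum>B\<in>coset_blocks. 2 * (card B - 1))"
    using coset_blocks_orbits by (intro sum_mono) force
  finally have "card (inv_orbit ` Good) \<le> 2 * (\<Sum>B\<in>coset_blocks. card B - 1)"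
    by (simp add: sum_distrib_left)
  then show ?thesis using card_le_twice_inv_orbits[OF finGood] unfolding Good_def by linarith
qed

text \<open>Counting: at least half of the group lies outside K, at most a sixth consists of
  the degenerate square roots of h, and every other element lies in a block of at least
  two orbits; so the blocks have total excess at least n/12.\<close>
lemma coset_blocks_excess:
  assumes fin: "finite (carrier G)" and nt: "\<not> two_group G" and proper: "K \<noteq> carrier G"
    and h: "h \<in> H" "h \<noteq> \<one>"
  shows "order G \<le> 12 * (\<Sum>B\<in>coset_blocks. card B - 1)"
proof -
  define Good where "Good = {x \<in> carrier G - K. 2 \<le> card (inv_orbit ` (H #> x))}"
  define Roots where "Roots = {x \<in> carrier G. h \<otimes> h = \<one> \<and> x \<otimes> x = h}"
  have hc: "h \<in> carrier G" using subgroup.mem_carrier[OF H h(1)] .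
  have finK: "finite K" using finite_subset[OF subgroup.subset[OF K] fin] .
  have "card (carrier G - K) = order G - card K"
    unfolding order_def using card_Diff_subset[OF finK subgroup.subset[OF K]] .
  moreover have "2 * card K \<le> order G" using card_proper_subgroup[OF fin K proper] .
  moreover have "6 * card Roots \<le> order G"
  proof (cases "h \<otimes> h = \<one>")
    case True
    then show ?thesis unfolding Roots_def using card_square_roots[OF fin nt hc h(2)] by simp
  next
    case False
    then show ?thesis unfolding Roots_def by simp
  qed
  moreover have "card (carrier G - K) \<le> card Good + card Roots"
  proof -
    have "carrier G - K \<subseteq> Good \<union> Roots"
      using coset_single_orbit[OF fin h] unfolding Good_def Roots_def by fastforce
    then have "card (carrier G - K) \<le> card (Good \<union> Roots)"
      using fin by (intro card_mono) (simp_all add: Good_def Roots_def)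
    also have "\<dots> \<le> card Good + card Roots" by (rule card_Un_le)
    finally show ?thesis .
  qed
  moreover have "card Good \<le> 4 * (\<Sum>B\<in>coset_blocks. card B - 1)"
    unfolding Good_def using card_block_points[OF fin] .
  ultimately show ?thesis by linarith
qed

lemma prob_coset_closed:
  assumes fin: "finite (carrier G)" and nt: "\<not> two_group G" and proper: "K \<noteq> carrier G"
    and h: "h \<in> H" "h \<noteq> \<one>" and p: "0 \<le> p" "p \<le> 1/2"
  shows "rand_prob G p (\<lambda>S. \<forall>y\<in>S - K. H #> y \<subseteq> S) \<le> exp (- p * real (order G) / 12)"
proof -
  define e where "e = (\<Sum>B\<in>coset_blocks. card B - 1)"
  let ?w = "subset_weight (inv_orbits G) p"
  have "rand_prob G p (\<lambda>S. \<forall>y\<in>S - K. H #> y \<subseteq> S)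
      \<le> (\<Sum>T\<in>{T. T \<subseteq> inv_orbits G \<and> (\<forall>B\<in>coset_blocks. B \<subseteq> T \<or> B \<inter> T = {})}. ?w T)"
    unfolding rand_prob_as_weight
  proof (rule sum_mono2)
    show "finite {T. T \<subseteq> inv_orbits G \<and> (\<forall>B\<in>coset_blocks. B \<subseteq> T \<or> B \<inter> T = {})}"
      using finite_inv_orbits[OF fin] by simp
    show "{T. T \<subseteq> inv_orbits G \<and> (\<forall>y\<in>\<Union>T - K. H #> y \<subseteq> \<Union>T)}
        \<subseteq> {T. T \<subseteq> inv_orbits G \<and> (\<forall>B\<in>coset_blocks. B \<subseteq> T \<or> B \<inter> T = {})}"
      using coset_closed_all_or_nothing by blast
  qed (rule subset_weight_nonneg; use p in linarith)
  also have "\<dots> \<le> (1 - p) ^ e"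
    unfolding e_def using finite_coset_blocks[OF fin] finite_inv_orbits[OF fin]
      coset_blocks_orbits coset_blocks_disjoint p
    by (intro all_or_nothing_bound) auto
  also have "\<dots> \<le> exp (- p) ^ e"
    using p exp_ge_add_one_self[of "-p"] by (intro power_mono) auto
  also have "\<dots> = exp (- p * real e)" by (simp add: exp_of_nat_mult[symmetric] mult.commute)
  also have "\<dots> \<le> exp (- p * real (order G) / 12)"
  proof -
    have "real (order G) \<le> real (12 * e)"
      unfolding e_def using coset_blocks_excess[OF fin nt proper h] by (simp only: of_nat_le_iff)
    then have "p * real (order G) \<le> p * (12 * real e)" using p(1) by (intro mult_left_mono) simp_all
    then show ?thesis by simp
  qed
  finally show ?thesis .
qed

end

end

section \<open>The union bound\<close>

context group
begin

lemma bad_event_cyclic: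
  assumes "bad_event G S"
  shows "\<exists>h K. h \<in> carrier G \<and> subgroup K G \<and> h \<in> K \<and> h \<noteq> \<one> \<and> K \<noteq> carrier G \<and>
           (\<forall>y\<in>S - K. generate G {h} #> y \<subseteq> S)"
proof -
  obtain H K C where H: "subgroup H G" and K: "subgroup K G" and nontriv: "H \<noteq> {\<one>}"
    and HK: "H \<subseteq> K" and proper: "K \<noteq> carrier G" and C: "C \<subseteq> rcosets H" "S - K = \<Union>C"
    using assms unfolding bad_event_def by blast
  obtain h where h: "h \<in> H" "h \<noteq> \<one>" using nontriv subgroup.one_closed[OF H] by blast
  have hH: "generate G {h} \<subseteq> H" using generate_subgroup_incl[OF _ H] h(1) by simp
  have "generate G {h} #> y \<subseteq> S" if y: "y \<in> S - K" for y
  proof -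
    obtain c where c: "c \<in> C" "y \<in> c" using y C(2) by blast
    then obtain a where a: "a \<in> carrier G" "c = H #> a" using C(1) unfolding RCOSETS_def by blast
    have "generate G {h} #> y \<subseteq> H #> y" using hH unfolding r_coset_def by blast
    also have "\<dots> = c" using repr_independence[OF _ a(1) H] c(2) a(2) by simp
    also have "\<dots> \<subseteq> S" using c(1) C(2) by blast
    finally show ?thesis .
  qed
  moreover have "h \<in> carrier G" "h \<in> K" using subgroup.mem_carrier[OF H h(1)] HK h(1) by auto
  ultimately show ?thesis using K proper h(2) by blast
qed

end

context comm_group
begin

text \<open>Summing the single-event bound over the at most n^(m+1) pairs (h, K).\<close>
lemma bad_event_prob_le:
  assumes fin: "finite (carrier G)" and nt: "\<not> two_group G" and p: "0 \<le> p" "p \<le> 1/2"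
    and m: "order G < 2 ^ Suc m"
  shows "rand_prob G p (bad_event G) \<le> real (order G) ^ Suc m * exp (- p * real (order G) / 12)"
proof -
  define I where "I = {(h, K). h \<in> carrier G \<and> subgroup K G \<and> h \<in> K \<and> h \<noteq> \<one> \<and> K \<noteq> carrier G}"
  define E where "E = (\<lambda>(h, K) S. \<forall>y\<in>S - K. generate G {h} #> y \<subseteq> S)"
  have I_sub: "I \<subseteq> carrier G \<times> {K. subgroup K G}" unfolding I_def by auto
  have "{K. subgroup K G} \<subseteq> Pow (carrier G)" using subgroup.subset by auto
  then have fin_subgroups: "finite {K. subgroup K G}" using fin finite_subset by blast
  have finI: "finite I" using finite_subset[OF I_sub] fin fin_subgroups by blast
  have "card I \<le> card (carrier G \<times> {K. subgroup K G})"
    using fin fin_subgroups by (intro card_mono[OF _ I_sub]) simp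
  also have "\<dots> \<le> order G * order G ^ m"
    using card_subgroups_le[OF fin m] by (simp add: card_cartesian_product order_def)
  finally have "real (card I) \<le> real (order G) ^ Suc m"
    by (metis of_nat_le_iff of_nat_power power_Suc)
  have "rand_prob G p (bad_event G) \<le> (\<Sum>i\<in>I. rand_prob G p (E i))"
    using finite_inv_orbits[OF fin] finI p bad_event_cyclic
    by (intro rand_prob_union_bound) (auto simp: I_def E_def)
  also have "\<dots> \<le> (\<Sum>i\<in>I. exp (- p * real (order G) / 12))"
  proof (rule sum_mono, clarify)
    fix h K assume "(h, K) \<in> I"
    then have h: "h \<in> carrier G" "h \<noteq> \<one>" and K: "subgroup K G" "h \<in> K" "K \<noteq> carrier G"
      unfolding I_def by auto
    have "subgroup (generate G {h}) G" using generate_is_subgroup h(1) by simp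
    moreover have "generate G {h} \<subseteq> K" using generate_subgroup_incl[OF _ K(1)] K(2) by simp
    moreover have "h \<in> generate G {h}" by (rule generate.incl) simp
    ultimately show "rand_prob G p (E (h, K)) \<le> exp (- p * real (order G) / 12)"
      unfolding E_def using prob_coset_closed[OF _ K(1) _ fin nt K(3) _ h(2) p] by simp
  qed
  also have "\<dots> \<le> real (order G) ^ Suc m * exp (- p * real (order G) / 12)"
    using \<open>real (card I) \<le> real (order G) ^ Suc m\<close> by (simp add: mult_right_mono)
  finally show ?thesis .
qed

end

section \<open>The final estimate\<close>

lemma less_two_pow_floor_log:
  assumes "0 < n"
  shows "n < 2 ^ Suc (nat \<lfloor>log 2 (real n)\<rfloor>)"
proof -
  have "log 2 (real n) < real (Suc (nat \<lfloor>log 2 (real n)\<rfloor>))"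
    using assms by linarith
  then have "real n < 2 powr real (Suc (nat \<lfloor>log 2 (real n)\<rfloor>))"
    using assms by (simp add: log_less_iff del: of_nat_Suc)
  then have "real n < real (2 ^ Suc (nat \<lfloor>log 2 (real n)\<rfloor>))"
    by (simp add: powr_realpow del: of_nat_Suc)
  then show ?thesis by (simp only: of_nat_less_iff)
qed

lemma count_vs_decay:
  fixes n :: nat and p :: real
  assumes n: "1 \<le> n" and m: "m = nat \<lfloor>log 2 (real n)\<rfloor>"
    and p: "25 * (log 2 (real n))^2 / real n \<le> p"
  shows "real n ^ Suc m * exp (- p * real n / 12) \<le> exp 3 * exp (- ((log 2 (real n))^2))"
proof -
  define L where "L = log 2 (real n)"
  have npos: "0 < real n" using n by simp
  have L0: "0 \<le> L" unfolding L_def using n by simp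
  have mL: "real m \<le> L" unfolding m L_def using L0 by (simp add: L_def)
  have "real n ^ Suc m = exp (real (Suc m) * ln (real n))"
    using npos by (subst exp_of_nat_mult) simp
  moreover have "real (Suc m) * ln (real n) \<le> (L + 1) * L"
  proof -
    have "ln (real n) = L * ln 2" unfolding L_def log_def by simp
    moreover have "real (Suc m) * ln (real n) \<le> (L + 1) * ln (real n)"
      using mL n by (intro mult_right_mono) auto
    moreover have "(L + 1) * L * ln 2 \<le> (L + 1) * L"
      using L0 ln_2_less_1 by (simp add: mult_left_le)
    ultimately show ?thesis by simp
  qed
  moreover have "(L + 1) * L - p * real n / 12 \<le> 3 - L^2"
  proof -
    have "25 * L^2 \<le> p * real n" using p npos unfolding L_def by (simp add: pos_divide_le_eq)
    moreover have "0 \<le> (L - 6)^2" by simp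
    ultimately show ?thesis by (simp add: power2_eq_square algebra_simps)
  qed
  ultimately have "real n ^ Suc m * exp (- p * real n / 12) \<le> exp (3 - L^2)"
    by (simp add: exp_add[symmetric])
  then show ?thesis unfolding L_def by (simp add: exp_diff exp_minus field_simps)
qed

theorem mainTheorem2:
  shows "\<exists>C N0. \<forall>(G :: 'a monoid) (p :: real).
     comm_group G \<and> finite (carrier G) \<and> \<not> two_group G \<and> order G \<ge> N0 \<and>
     25 * (log 2 (real (order G)))^2 / real (order G) \<le> p \<and> p \<le> 1/2 \<longrightarrow>
     rand_prob G p (bad_event G) \<le> C * exp (- ((log 2 (real (order G)))^2))"
proof (intro exI[of _ "exp 3"] exI[of _ "0::nat"] allI impI, elim conjE)
  fix G :: "'a monoid" and p :: real
  assume cg: "comm_group G" and fin: "finite (carrier G)" and nt: "\<not> two_group G"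
    and lower: "25 * (log 2 (real (order G)))^2 / real (order G) \<le> p" and upper: "p \<le> 1/2"
  interpret comm_group G by (rule cg)
  define m where "m = nat \<lfloor>log 2 (real (order G))\<rfloor>"
  have n_pos: "0 < order G" using fin order_gt_0_iff_finite by blast
  have p_nonneg: "0 \<le> p" by (rule order_trans[OF _ lower]) simp
  have "rand_prob G p (bad_event G) \<le> real (order G) ^ Suc m * exp (- p * real (order G) / 12)"
    using bad_event_prob_le[OF fin nt p_nonneg upper] less_two_pow_floor_log[OF n_pos]
    unfolding m_def by blast
  also have "\<dots> \<le> exp 3 * exp (- ((log 2 (real (order G)))^2))"
    using count_vs_decay[OF _ m_def lower] n_pos by simp
  finally show "rand_prob G p (bad_event G) \<le> exp 3 * exp (- ((log 2 (real (order G)))^2))" .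
qed

end
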